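(* Consider the recursive multi-rooted algorithm $\mathrm{DST}(I,\widetilde{\mathrm{opt}})$ described in the context, applied to a planar \textsc{Multi-Rooted Directed Steiner Tree} instance $I=(G=(V,E),c,\{r_1,\dots,r_R\},X)$ with positive integer edge costs. Let $\ell$ and $o$ be non-negative integers with $|X|\le 2^{\ell}$ and $\widetilde{\mathrm{opt}}\le 2^{o}$. If $\widetilde{\mathrm{opt}}\ge\mathrm{opt}$, where $\mathrm{opt}$ is the optimal value of $I$, then $\mathrm{DST}(I,\widetilde{\mathrm{opt}})$ returns a feasible solution of cost at most $(8(R+\ell)+1)\cdot\mathrm{opt}$, and the number of recursive calls is at most $|X|\cdot 2^{2\ell+o}$.
   Context: MR-DST: digraph $G=(V,E)$ (parallel edges allowed, planar underlying undirected graph) with positive integer costs $c_e$, roots $r_1,\dots,r_R$, terminals $X\subseteq V\setminus\{r_1,\dots,r_R\}$; feasible $F\subseteq E$: every terminal reachable from some root via $F$; cost $\sum_{e\in F}c_e$; $\mathrm{opt}$ the minimum cost. $d(\{r_1,\dots,r_R\},v)=\min_j d(r_j,v)$ (shortest-path distances). $A_1,\dots,A_R$: vertex-disjoint shortest-path arborescences rooted at $r_1,\dots,r_R$ such that for $v\in V(A_i)$ the $r_i$–$v$ path in $A_i$ has cost $d(\{r_1,\dots,r_R\},v)$ (obtained from a shortest-path arborescence from an auxiliary vertex joined to all roots by zero-cost edges). A multi-rooted partial arborescence is $T=F\cup\bigcup_j T_{j}$ with $T_j$ vertex-disjoint partial arborescences (directed trees oriented away from their root) rooted at roots $r_j$,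 $F$ a set of edges not in any $T_j$ with endpoints in $\bigcup_j V(T_j)$, $T$ weakly connected and acyclic in the undirected sense. Induced subinstances for components $C_1,\dots,C_h$ of $G\setminus T$: contract $T$ into a new vertex $r_T$ (edges inherit costs), $I_{C_i}=(G_{\mathrm{contract}}[C_i\cup\{r_T\}],c,\{r_T\}\cup(\text{roots in }C_i),C_i\cap X)$. Algorithm $\mathrm{DST}(I,\widetilde{\mathrm{opt}})$: (1) if $\widetilde{\mathrm{opt}}<1$ or $d(\{r_1,\dots,r_R\},t)>\widetilde{\mathrm{opt}}$ for some $t\in X$, return infeasible; (2) else if $|X|=1$, return a shortest directed path from the root set to the terminal; (3) otherwise let $\mathcal F_1=\mathrm{DST}(I,\widetilde{\mathrm{opt}}/2)$ (cost $\infty$ if infeasible); remove all vertices $v$ with $d(\{r_1,\dots,r_R\},v)>\widetilde{\mathrm{opt}}$; compute a multi-rooted partial arborescence $T=F\cup\bigcup_{j=1}^R T_j$ in which each $T_j$ is empty or a subtree of $A_j$ rooted at $r_j$ that is the union of up to four shortest directed paths starting at $r_j$, and such that each weakly connected component $C_i$ of $G\setminus T$ contains at most $|X|/2$ terminals; let $\mathcal F'_i=\mathrm{DST}(I_{C_i},\widetilde{\mathrm{opt}})$ and $\mathcal F_2$ the edges of $G$ corresponding to $(E(T)\setminus F)\cup\bigcup_i\mathcal F'_i$ (cost $\infty$ if some $\mathcal F'_i$ is infeasible); return infeasible if both costs are $\infty$, else the cheaper of $\mathcal F_1,\mathcal F_2$. *)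

theory Defs
  imports "HOL-Analysis.Analysis" "HOL-Library.Extended_Real" "HOL-Library.Extended_Nat"
begin

text \<open>A digraph with parallel edges: vertices of type 'v, edges of type 'e, each edge
  has a tail and a head. Costs are natural numbers (positivity is part of well-formedness).\<close>

record ('v, 'e) inst =
  iV :: "'v set"
  iE :: "'e set"
  tail :: "'e \<Rightarrow> 'v"
  head :: "'e \<Rightarrow> 'v"
  cost :: "'e \<Rightarrow> nat"
  roots :: "'v set"
  terms :: "'v set"

definition wf_inst :: "('v, 'e) inst \<Rightarrow> bool" where
  "wf_inst I \<longleftrightarrow> finite (iV I) \<and> finite (iE I)
     \<and> (\<forall>e\<in>iE I. tail I e \<in> iV I \<and> head I e \<in> iV I)
     \<and> (\<forall>e\<in>iE I. cost I e > 0)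
     \<and> roots I \<subseteq> iV I \<and> terms I \<subseteq> iV I - roots I"

text \<open>Planarity of the underlying undirected (multi)graph: an embedding into the plane
  with vertices mapped to distinct points and every non-loop edge drawn as an arc between
  its endpoints, arcs not passing through other vertices and pairwise meeting only in
  common endpoints. (Loops never affect planarity.)\<close>

definition planar_inst :: "('v, 'e) inst \<Rightarrow> bool" where
  "planar_inst I \<longleftrightarrow> (\<exists>(pos :: 'v \<Rightarrow> complex) (\<gamma> :: 'e \<Rightarrow> real \<Rightarrow> complex).
     inj_on pos (iV I)
     \<and> (\<forall>e\<in>iE I. tail I e \<noteq> head I e \<longrightarrow>
          arc (\<gamma> e) \<and> pathstart (\<gamma> e) = pos (tail I e) \<and> pathfinish (\<gamma> e) = pos (head I e)
          \<and> path_image (\<gamma> e) \<inter> pos ` iV I = {pos (tail I e), pos (head I e)})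
     \<and> (\<forall>e\<in>iE I. \<forall>e'\<in>iE I. e \<noteq> e' \<longrightarrow> tail I e \<noteq> head I e \<longrightarrow> tail I e' \<noteq> head I e' \<longrightarrow>
          path_image (\<gamma> e) \<inter> path_image (\<gamma> e') \<subseteq> pos ` {tail I e, head I e}))"

fun walk :: "('e \<Rightarrow> 'v) \<Rightarrow> ('e \<Rightarrow> 'v) \<Rightarrow> 'e set \<Rightarrow> 'v \<Rightarrow> 'e list \<Rightarrow> 'v \<Rightarrow> bool" where
  "walk ta he S u [] v \<longleftrightarrow> u = v"
| "walk ta he S u (e # es) v \<longleftrightarrow> e \<in> S \<and> ta e = u \<and> walk ta he S (he e) es v"

definition pcost :: "('v, 'e) inst \<Rightarrow> 'e list \<Rightarrow> nat" where
  "pcost I p = sum_list (map (cost I) p)"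

definition setcost :: "('v, 'e) inst \<Rightarrow> 'e set \<Rightarrow> nat" where
  "setcost I F = (\<Sum>e\<in>F. cost I e)"

text \<open>Shortest-path distance from the vertex set S to v (infinite if unreachable).\<close>
definition dist :: "('v, 'e) inst \<Rightarrow> 'v set \<Rightarrow> 'v \<Rightarrow> ereal" where
  "dist I S v = Inf {ereal (real (pcost I p)) | r p. r \<in> S \<and> walk (tail I) (head I) (iE I) r p v}"

definition feasible :: "('v, 'e) inst \<Rightarrow> 'e set \<Rightarrow> bool" where
  "feasible I F \<longleftrightarrow> F \<subseteq> iE I \<and>
     (\<forall>t\<in>terms I. \<exists>r\<in>roots I. \<exists>p. walk (tail I) (head I) F r p t)"

definition optv :: "('v, 'e) inst \<Rightarrow> nat" where
  "optv I = Min (setcost I ` {F. feasible I F})"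

definition uedges :: "('e \<Rightarrow> 'v) \<Rightarrow> ('e \<Rightarrow> 'v) \<Rightarrow> 'e set \<Rightarrow> ('v \<times> 'v) set" where
  "uedges ta he S = {(ta e, he e) | e. e \<in> S} \<union> {(he e, ta e) | e. e \<in> S}"

text \<open>An undirected cycle in the edge set S (parallel edges form cycles of length 2,
  loops cycles of length 1).\<close>
definition has_ucycle :: "('e \<Rightarrow> 'v) \<Rightarrow> ('e \<Rightarrow> 'v) \<Rightarrow> 'e set \<Rightarrow> bool" where
  "has_ucycle ta he S \<longleftrightarrow> (\<exists>es vs. es \<noteq> [] \<and> distinct es \<and> set es \<subseteq> S
      \<and> length vs = length es \<and> distinct vs
      \<and> (\<forall>i<length es. {ta (es ! i), he (es ! i)} = {vs ! i, vs ! ((i + 1) mod length es)}))"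

definition inner_edges :: "('v, 'e) inst \<Rightarrow> 'v set \<Rightarrow> 'e set" where
  "inner_edges I W = {e \<in> iE I. tail I e \<in> W \<and> head I e \<in> W}"

definition comps :: "('v, 'e) inst \<Rightarrow> 'v set \<Rightarrow> 'v set set" where
  "comps I W = {{v \<in> W. (u, v) \<in> (uedges (tail I) (head I) (inner_edges I W))\<^sup>*} | u. u \<in> W}"

definition restrict_dist :: "('v, 'e) inst \<Rightarrow> real \<Rightarrow> ('v, 'e) inst" where
  "restrict_dist I x = (let W = {v \<in> iV I. dist I (roots I) v \<le> ereal x} in
     I\<lparr> iV := W, iE := inner_edges I W, roots := roots I \<inter> W, terms := terms I \<inter> W \<rparr>)"

text \<open>Induced subinstance for component C: the vertex set Vt of the partial arborescence
  is contracted into the new vertex rT (a vertex name not in C).\<close>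
definition contract_sub :: "('v, 'e) inst \<Rightarrow> 'v set \<Rightarrow> 'v set \<Rightarrow> 'v \<Rightarrow> ('v, 'e) inst" where
  "contract_sub I Vt C rT =
     \<lparr> iV = C \<union> {rT},
       iE = {e \<in> iE I. tail I e \<in> C \<union> Vt \<and> head I e \<in> C \<union> Vt},
       tail = (\<lambda>e. if tail I e \<in> Vt then rT else tail I e),
       head = (\<lambda>e. if head I e \<in> Vt then rT else head I e),
       cost = cost I,
       roots = {rT} \<union> (roots I \<inter> C),
       terms = terms I \<inter> C \<rparr>"

definition arb_verts :: "('v, 'e) inst \<Rightarrow> 'e set \<Rightarrow> 'v \<Rightarrow> 'v set" where
  "arb_verts I A r = insert r (head I ` A)"

definition sp_arborescences :: "('v, 'e) inst \<Rightarrow> ('v \<Rightarrow> 'e set) \<Rightarrow> bool" where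
  "sp_arborescences I A \<longleftrightarrow>
     (\<forall>r\<in>roots I. A r \<subseteq> iE I
        \<and> (\<forall>e\<in>A r. head I e \<noteq> r \<and> tail I e \<in> arb_verts I (A r) r)
        \<and> (\<forall>v\<in>arb_verts I (A r) r - {r}. \<exists>!e. e \<in> A r \<and> head I e = v)
        \<and> (\<forall>v\<in>arb_verts I (A r) r. \<exists>p. walk (tail I) (head I) (A r) r p v
                \<and> ereal (real (pcost I p)) = dist I (roots I) v))
   \<and> (\<forall>r\<in>roots I. \<forall>r'\<in>roots I. r \<noteq> r' \<longrightarrow> arb_verts I (A r) r \<inter> arb_verts I (A r') r' = {})
   \<and> (\<Union>r\<in>roots I. arb_verts I (A r) r)
       = {v \<in> iV I. \<exists>r\<in>roots I. \<exists>p. walk (tail I) (head I) (iE I) r p v}"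

text \<open>T_r is the union of the paths in A r from r given by the (at most four) walks P r;
  it is empty iff P r is empty.\<close>
definition T_edges :: "('v \<Rightarrow> 'e list set) \<Rightarrow> 'v \<Rightarrow> 'e set" where
  "T_edges P r = (\<Union>p\<in>P r. set p)"

definition T_verts :: "('v, 'e) inst \<Rightarrow> ('v \<Rightarrow> 'e list set) \<Rightarrow> 'v \<Rightarrow> 'v set" where
  "T_verts I P r = (if P r = {} then {} else insert r (head I ` T_edges P r))"

text \<open>The multi-rooted partial arborescence T = F \<union> \<Union>_r T_r, with the separation property:
  every weakly connected component of the remaining graph has at most |X|/2 terminals.\<close>
definition good_separator :: "('v, 'e) inst \<Rightarrow> ('v \<Rightarrow> 'e set) \<Rightarrow> ('v \<Rightarrow> 'e list set) \<Rightarrow> 'e set \<Rightarrow> bool" where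
  "good_separator I A P F \<longleftrightarrow>
     (let Te = (\<Union>r\<in>roots I. T_edges P r); Vt = (\<Union>r\<in>roots I. T_verts I P r) in
       (\<forall>r\<in>roots I. finite (P r) \<and> card (P r) \<le> 4
           \<and> (\<forall>p\<in>P r. \<exists>v. walk (tail I) (head I) (A r) r p v))
       \<and> F \<subseteq> iE I \<and> F \<inter> Te = {}
       \<and> (\<forall>e\<in>F. tail I e \<in> Vt \<and> head I e \<in> Vt)
       \<and> (\<forall>u\<in>Vt. \<forall>v\<in>Vt. (u, v) \<in> (uedges (tail I) (head I) (F \<union> Te))\<^sup>*)
       \<and> \<not> has_ucycle (tail I) (head I) (F \<union> Te)
       \<and> (\<forall>C\<in>comps I (iV I - Vt). 2 * card (C \<inter> terms I) \<le> card (terms I)))"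

text \<open>Cost of a possibly infeasible result (None = infeasible, cost \<infinity>).\<close>
definition ocost :: "('v, 'e) inst \<Rightarrow> 'e set option \<Rightarrow> enat" where
  "ocost I r = (case r of None \<Rightarrow> \<infinity> | Some F \<Rightarrow> enat (setcost I F))"

text \<open>dst_run I x res n: some execution of DST(I, x) (over all admissible choices of shortest
  paths, arborescences, separators and names of contracted vertices) returns res
  (None = infeasible) and makes n calls in total (counting this call itself).\<close>

inductive dst_run :: "('v, 'e) inst \<Rightarrow> real \<Rightarrow> 'e set option \<Rightarrow> nat \<Rightarrow> bool" where
  infeas: "x < 1 \<or> (\<exists>t\<in>terms I. dist I (roots I) t > ereal x) \<Longrightarrow> dst_run I x None 1"
| single: "\<not> x < 1 \<Longrightarrow> (\<forall>t\<in>terms I. dist I (roots I) t \<le> ereal x) \<Longrightarrow> terms I = {t} \<Longrightarrow>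
     r \<in> roots I \<Longrightarrow> walk (tail I) (head I) (iE I) r p t \<Longrightarrow>
     (\<forall>r'\<in>roots I. \<forall>q. walk (tail I) (head I) (iE I) r' q t \<longrightarrow> pcost I p \<le> pcost I q) \<Longrightarrow>
     dst_run I x (Some (set p)) 1"
| recur: "\<not> x < 1 \<Longrightarrow> (\<forall>t\<in>terms I. dist I (roots I) t \<le> ereal x) \<Longrightarrow> card (terms I) \<noteq> 1 \<Longrightarrow>
     dst_run I (x / 2) res1 n1 \<Longrightarrow>
     I' = restrict_dist I x \<Longrightarrow>
     sp_arborescences I' A \<Longrightarrow>
     good_separator I' A P F \<Longrightarrow>
     Te = (\<Union>r\<in>roots I'. T_edges P r) \<Longrightarrow>
     Vt = (\<Union>r\<in>roots I'. T_verts I' P r) \<Longrightarrow>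
     Cs = {C \<in> comps I' (iV I' - Vt). C \<inter> terms I' \<noteq> {}} \<Longrightarrow>
     (\<forall>C\<in>Cs. rT C \<notin> C \<and> dst_run (contract_sub I' Vt C (rT C)) x (resC C) (nC C)) \<Longrightarrow>
     res2 = (if (\<forall>C\<in>Cs. resC C \<noteq> None) then Some (Te \<union> (\<Union>C\<in>Cs. the (resC C))) else None) \<Longrightarrow>
     (res = res1 \<or> res = res2) \<Longrightarrow> ocost I res \<le> ocost I res1 \<Longrightarrow> ocost I res \<le> ocost I res2 \<Longrightarrow>
     dst_run I x res (1 + n1 + (\<Sum>C\<in>Cs. nC C))"

end

theory Submission
  imports Defs
begin

text \<open>Feasibility: a terminal on the partial arborescence T is reached from a root along T; any other
  terminal lies in a component C, and the solution of the subinstance of C reaches it either from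
  a root inside C or from the contracted vertex, i.e. from a vertex of T.

  Cost: if opt \<le> x/2, the call with x/2 already meets the bound. Otherwise x < 2 opt. An optimal
  solution survives the restriction to distance x and splits into disjoint feasible solutions of
  the subinstances, so their optima sum to at most opt. T consists of at most four shortest
  paths of length at most x for each of the u roots it touches, so it costs at most
  4 x u \<le> 8 u opt; each subinstance has at most R - u + 1 roots and at most 2^(l-1)
  terminals, so by induction the subsolutions cost at most (8 (R - u + l) + 1) opt in total.

  Calls: the subinstances have disjoint terminal sets of at most half the size, whence
  n(l, k) \<le> 1 + n(l, k - 1) + |X| 2^(2 l - 2 + k).\<close>

lemma sum_set_le_sum_list:
  fixes f :: "'a \<Rightarrow> 'b::canonically_ordered_monoid_add"
  shows "sum f (set xs) \<le> sum_list (map f xs)"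
proof (induction xs)
  case (Cons a xs)
  have "sum f (set (a # xs)) \<le> f a + sum f (set xs)"
    by (simp add: sum.insert_if add_increasing)
  also have "\<dots> \<le> sum_list (map f (a # xs))"
    using Cons by (simp add: add_left_mono)
  finally show ?case .
qed simp

lemma sum_UN_le:
  fixes f :: "'a \<Rightarrow> nat"
  assumes "finite I" "\<And>i. i \<in> I \<Longrightarrow> finite (A i)"
  shows "sum f (\<Union>i\<in>I. A i) \<le> (\<Sum>i\<in>I. sum f (A i))"
  using assms
proof (induction I rule: finite_induct)
  case (insert i I)
  then have "sum f (\<Union>j\<in>insert i I. A j) \<le> sum f (A i) + sum f (\<Union>j\<in>I. A j)"
    by (simp add: sum_Un_nat)
  also have "\<dots> \<le> sum f (A i) + (\<Sum>j\<in>I. sum f (A j))"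
    using insert by simp
  finally show ?case
    using insert by simp
qed simp

lemma walk_append [simp]:
  "walk ta he S u (p @ q) v \<longleftrightarrow> (\<exists>w. walk ta he S u p w \<and> walk ta he S w q v)"
  by (induction p arbitrary: u) auto

lemma walk_edges_subset: "walk ta he S u p v \<Longrightarrow> set p \<subseteq> S"
  by (induction p arbitrary: u) auto

lemma walk_mono: "walk ta he S u p v \<Longrightarrow> set p \<subseteq> S' \<Longrightarrow> walk ta he S' u p v"
  by (induction p arbitrary: u) auto

lemma walk_last: "walk ta he S u p v \<Longrightarrow> v = u \<or> v \<in> he ` set p"
  by (induction p arbitrary: u) auto

lemma walk_distinct_exists:
  assumes "walk ta he S u p v"
  obtains q where "walk ta he S u q v" "distinct q"
  using assms
proof (induction "length p" arbitrary: p rule: less_induct)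
  case less
  show ?case
  proof (cases "distinct p")
    case False
    then obtain xs ys zs y where p: "p = xs @ [y] @ ys @ [y] @ zs"
      using not_distinct_decomp by blast
    \<comment> \<open>cut out the closed subwalk between the two occurrences of y\<close>
    have w: "walk ta he S u (xs @ [y] @ zs) v"
      using less.prems(2) p by auto
    have "length (xs @ [y] @ zs) < length p"
      using p by simp
    then show ?thesis
    proof (rule less.hyps[OF _ _ w])
      fix q assume "walk ta he S u q v" "distinct q"
      then show thesis
        by (rule less.prems(1))
    qed
  qed (use less.prems in blast)
qed

lemma walk_unique:
  assumes "walk ta he S r p v" "walk ta he S r q v"
    and "\<forall>e\<in>S. he e \<noteq> r" and "\<forall>e\<in>S. \<forall>e'\<in>S. he e = he e' \<longrightarrow> e = e'"
  shows "p = q"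
  using assms(1,2)
proof (induction p arbitrary: q v rule: rev_induct)
  case Nil
  then show ?case
    using assms(3) by (cases q rule: rev_cases) auto
next
  case (snoc e p)
  then have e: "e \<in> S" "he e = v" "walk ta he S r p (ta e)"
    by auto
  show ?case
  proof (cases q rule: rev_cases)
    case Nil
    then show ?thesis
      using snoc.prems e assms(3) by auto
  next
    case (snoc q' e')
    then have "e' \<in> S" "he e' = v" "walk ta he S r q' (ta e')"
      using snoc.prems(2) by auto
    then show ?thesis
      using snoc.IH e assms(4) \<open>q = q' @ [e']\<close> by metis
  qed
qed

lemma walk_split_at_last_visit:
  assumes "walk ta he S a p t" "t \<notin> Vt"
  shows "(a \<notin> Vt \<and> (\<forall>e\<in>set p. he e \<notin> Vt))
    \<or> (\<exists>p1 p2 u. p = p1 @ p2 \<and> u \<in> Vt \<and> walk ta he S a p1 u \<and> walk ta he S u p2 t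
                 \<and> (\<forall>e\<in>set p2. he e \<notin> Vt))"
  using assms
proof (induction p arbitrary: a)
  case (Cons e p)
  then have e: "ta e = a" "walk ta he S (he e) p t"
    by auto
  from Cons.IH[OF e(2) Cons.prems(2)] show ?case
  proof
    assume "he e \<notin> Vt \<and> (\<forall>e\<in>set p. he e \<notin> Vt)"
    moreover have "a \<in> Vt \<Longrightarrow> ?thesis"
      using calculation Cons.prems(1)
      by (intro disjI2 exI[of _ "[]"] exI[of _ "e # p"] exI[of _ a]) auto
    ultimately show ?thesis
      by auto
  next
    assume "\<exists>p1 p2 u. p = p1 @ p2 \<and> u \<in> Vt \<and> walk ta he S (he e) p1 u \<and> walk ta he S u p2 t
              \<and> (\<forall>e\<in>set p2. he e \<notin> Vt)"
    then obtain p1 p2 u where "p = p1 @ p2" "u \<in> Vt" "walk ta he S (he e) p1 u"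
      "walk ta he S u p2 t" "\<forall>e\<in>set p2. he e \<notin> Vt"
      by blast
    then show ?thesis
      using Cons.prems(1) by (intro disjI2 exI[of _ "e # p1"] exI[of _ p2] exI[of _ u]) auto
  qed
qed simp

lemma wf_instD:
  assumes "wf_inst I"
  shows "finite (iV I)" "finite (iE I)" "finite (roots I)" "finite (terms I)"
    and "e \<in> iE I \<Longrightarrow> tail I e \<in> iV I" "e \<in> iE I \<Longrightarrow> head I e \<in> iV I"
    and "e \<in> iE I \<Longrightarrow> 0 < cost I e"
    and "roots I \<subseteq> iV I" "terms I \<subseteq> iV I - roots I"
  using assms unfolding wf_inst_def by (auto intro: finite_subset)

lemma pcost_simps [simp]:
  "pcost I [] = 0"
  "pcost I (e # p) = cost I e + pcost I p"
  "pcost I (p @ q) = pcost I p + pcost I q"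
  by (simp_all add: pcost_def)

lemma setcost_set_le_pcost: "setcost I (set p) \<le> pcost I p"
  unfolding setcost_def pcost_def by (rule sum_set_le_sum_list)

lemma dist_le_pcost:
  "r \<in> S \<Longrightarrow> walk (tail I) (head I) (iE I) r p v \<Longrightarrow> dist I S v \<le> ereal (real (pcost I p))"
  unfolding dist_def by (rule Inf_lower) blast

lemma dist_attained:
  assumes "dist I S v \<le> ereal x"
  obtains r p where "r \<in> S" "walk (tail I) (head I) (iE I) r p v"
    "dist I S v = ereal (real (pcost I p))"
proof -
  define N where "N = {pcost I p | r p. r \<in> S \<and> walk (tail I) (head I) (iE I) r p v}"
  have dist_N: "dist I S v = Inf ((\<lambda>n. ereal (real n)) ` N)"
    unfolding dist_def N_def by (rule arg_cong[where f = Inf]) blast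
  then have "N \<noteq> {}"
    using assms by (auto simp: top_ereal_def)
  define m where "m = (LEAST n. n \<in> N)"
  have "m \<in> N"
    unfolding m_def using \<open>N \<noteq> {}\<close> by (auto intro: LeastI)
  then obtain r p where rp: "r \<in> S" "walk (tail I) (head I) (iE I) r p v" "pcost I p = m"
    unfolding N_def by blast
  have "dist I S v = ereal (real (pcost I p))"
  proof (rule antisym)
    show "dist I S v \<le> ereal (real (pcost I p))"
      using rp(1,2) by (rule dist_le_pcost)
    show "ereal (real (pcost I p)) \<le> dist I S v"
      unfolding dist_N rp(3) m_def by (rule Inf_greatest) (auto intro: Least_le)
  qed
  then show thesis
    using that rp by blast
qed

lemma finite_feasible: "finite (iE I) \<Longrightarrow> finite {F. feasible I F}"
  by (rule finite_subset[of _ "Pow (iE I)"]) (auto simp: feasible_def)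

lemma optv_attained:
  assumes "finite (iE I)" "\<exists>F. feasible I F"
  obtains F where "feasible I F" "setcost I F = optv I"
proof -
  have "optv I \<in> setcost I ` {F. feasible I F}"
    unfolding optv_def using finite_feasible[OF assms(1)] assms(2) by (intro Min_in) auto
  then show thesis
    using that by auto
qed

lemma optv_le: "finite (iE I) \<Longrightarrow> feasible I F \<Longrightarrow> optv I \<le> setcost I F"
  unfolding optv_def using finite_feasible by (intro Min_le) auto

lemma feasible_cheap_walk:
  assumes "finite (iE I)" "feasible I F" "t \<in> terms I"
  obtains r q where "r \<in> roots I" "walk (tail I) (head I) (iE I) r q t" "set q \<subseteq> F"
    "pcost I q \<le> setcost I F"
proof -
  have F: "F \<subseteq> iE I"
    using assms(2) unfolding feasible_def by blast
  obtain r p where r: "r \<in> roots I" and p: "walk (tail I) (head I) F r p t"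
    using assms(2,3) unfolding feasible_def by blast
  obtain q where q: "walk (tail I) (head I) F r q t" "distinct q"
    using walk_distinct_exists[OF p] by blast
  have sq: "set q \<subseteq> F"
    using q(1) by (rule walk_edges_subset)
  have "pcost I q = setcost I (set q)"
    unfolding pcost_def setcost_def using q(2) by (simp add: sum_list_distinct_conv_sum_set)
  also have "\<dots> \<le> setcost I F"
    unfolding setcost_def using sq F assms(1) by (intro sum_mono2) (auto intro: finite_subset)
  finally show thesis
    using that r walk_mono[OF q(1)] sq F by blast
qed

lemma optv_pos:
  assumes "wf_inst I" "\<exists>F. feasible I F" "terms I \<noteq> {}"
  shows "1 \<le> optv I"
proof -
  have fin: "finite (iE I)"
    using assms(1) by (rule wf_instD)
  obtain F where F: "feasible I F" "setcost I F = optv I"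
    using optv_attained[OF fin assms(2)] .
  obtain t where t: "t \<in> terms I"
    using assms(3) by blast
  obtain r q where r: "r \<in> roots I" and q: "walk (tail I) (head I) (iE I) r q t" "set q \<subseteq> F"
    and "pcost I q \<le> setcost I F"
    using feasible_cheap_walk[OF fin F(1) t] .
  have "r \<noteq> t"
    using wf_instD(9)[OF assms(1)] r t by blast
  then obtain e where e: "e \<in> set q"
    using q(1) by (cases q) auto
  have "0 < cost I e"
    using wf_instD(7)[OF assms(1)] e walk_edges_subset[OF q(1)] by blast
  moreover have "cost I e \<le> setcost I F"
    unfolding setcost_def using e q(2) F(1) fin
    by (intro member_le_sum) (auto simp: feasible_def intro: finite_subset)
  ultimately show ?thesis
    using F(2) by simp
qed

lemma dist_le_optv:
  assumes "finite (iE I)" "\<exists>F. feasible I F" "t \<in> terms I"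
  shows "dist I (roots I) t \<le> ereal (real (optv I))"
proof -
  obtain F where F: "feasible I F" "setcost I F = optv I"
    using optv_attained[OF assms(1,2)] .
  obtain r q where "r \<in> roots I" "walk (tail I) (head I) (iE I) r q t" "pcost I q \<le> setcost I F"
    using feasible_cheap_walk[OF assms(1) F(1) assms(3)] .
  then show ?thesis
    using dist_le_pcost[of r "roots I" I q t] F(2) by (simp add: order_trans)
qed

lemma comps_subset: "C \<in> comps J Y \<Longrightarrow> C \<subseteq> Y"
  unfolding comps_def by auto

lemma comps_cover: "z \<in> Y \<Longrightarrow> \<exists>C\<in>comps J Y. z \<in> C"
  unfolding comps_def by blast

lemma comps_disjoint:
  assumes "C1 \<in> comps J Y" "C2 \<in> comps J Y" "z \<in> C1" "z \<in> C2"
  shows "C1 = C2"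
proof -
  let ?R = "(uedges (tail J) (head J) (inner_edges J Y))\<^sup>*"
  have sym: "sym ?R"
    by (rule sym_rtrancl) (auto simp: uedges_def sym_def)
  obtain u1 u2 where C1: "C1 = {v \<in> Y. (u1, v) \<in> ?R}" and C2: "C2 = {v \<in> Y. (u2, v) \<in> ?R}"
    using assms(1,2) unfolding comps_def by blast
  have "(u1, z) \<in> ?R" "(u2, z) \<in> ?R"
    using assms(3,4) unfolding C1 C2 by auto
  then have "(u1, u2) \<in> ?R" "(u2, u1) \<in> ?R"
    using sym by (meson rtrancl_trans symD)+
  then show ?thesis
    unfolding C1 C2 by (blast intro: rtrancl_trans)
qed

lemma comps_edge_closed:
  assumes "C \<in> comps J Y" "e \<in> inner_edges J Y"
  shows "tail J e \<in> C \<longleftrightarrow> head J e \<in> C"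
proof -
  let ?R = "uedges (tail J) (head J) (inner_edges J Y)"
  obtain u where u: "C = {v \<in> Y. (u, v) \<in> ?R\<^sup>*}"
    using assms(1) unfolding comps_def by blast
  have "(tail J e, head J e) \<in> ?R" "(head J e, tail J e) \<in> ?R"
    using assms(2) unfolding uedges_def by blast+
  moreover have "tail J e \<in> Y" "head J e \<in> Y"
    using assms(2) unfolding inner_edges_def by auto
  ultimately show ?thesis
    unfolding u using rtrancl_into_rtrancl[of u _ ?R] by blast
qed

lemma sum_card_Int_comps_le:
  assumes "Cs \<subseteq> comps J Y" "finite T"
  shows "(\<Sum>C\<in>Cs. card (T \<inter> C)) \<le> card T"
proof (cases "finite Cs")
  case True
  have "(\<Sum>C\<in>Cs. card (T \<inter> C)) = card (\<Union>C\<in>Cs. T \<inter> C)"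
  proof (rule card_UN_disjoint[symmetric])
    show "\<forall>C\<in>Cs. \<forall>C'\<in>Cs. C \<noteq> C' \<longrightarrow> T \<inter> C \<inter> (T \<inter> C') = {}"
    proof (intro ballI impI)
      fix C C' assume "C \<in> Cs" "C' \<in> Cs" "C \<noteq> C'"
      then show "T \<inter> C \<inter> (T \<inter> C') = {}"
        using comps_disjoint[of C J Y C'] assms(1) by blast
    qed
  qed (use True assms(2) in auto)
  also have "\<dots> \<le> card T"
    using assms(2) by (intro card_mono) auto
  finally show ?thesis .
qed simp

lemma walk_in_comp:
  assumes "C \<in> comps J Y" "walk (tail J) (head J) S a q t" "S \<subseteq> iE J" "t \<in> C"
    "\<forall>e\<in>set q. head J e \<in> Y"
  shows "(\<forall>e\<in>set q. head J e \<in> C) \<and> (a \<in> Y \<longrightarrow> a \<in> C)"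
  using assms(2-)
proof (induction q arbitrary: a)
  case (Cons e q)
  then have e: "e \<in> S" "tail J e = a" "walk (tail J) (head J) S (head J e) q t" "head J e \<in> Y"
    by auto
  with Cons have heads: "\<forall>e\<in>set q. head J e \<in> C" "head J e \<in> C"
    by auto
  have "a \<in> C" if "a \<in> Y"
  proof -
    have "e \<in> inner_edges J Y"
      using e that Cons.prems(2) unfolding inner_edges_def by auto
    then show ?thesis
      using comps_edge_closed[OF assms(1)] heads(2) e(2) by blast
  qed
  with heads show ?case
    by auto
qed simp

lemma restrict_dist_simps [simp]:
  "iV (restrict_dist I x) = {v \<in> iV I. dist I (roots I) v \<le> ereal x}"
  "iE (restrict_dist I x) = inner_edges I {v \<in> iV I. dist I (roots I) v \<le> ereal x}"
  "tail (restrict_dist I x) = tail I"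
  "head (restrict_dist I x) = head I"
  "cost (restrict_dist I x) = cost I"
  "roots (restrict_dist I x) = roots I \<inter> {v \<in> iV I. dist I (roots I) v \<le> ereal x}"
  "terms (restrict_dist I x) = terms I \<inter> {v \<in> iV I. dist I (roots I) v \<le> ereal x}"
  by (simp_all add: restrict_dist_def Let_def)

lemma roots_in_restrict_dist:
  assumes "wf_inst I" "r \<in> roots I" "0 \<le> x"
  shows "r \<in> iV (restrict_dist I x)"
proof -
  have "dist I (roots I) r \<le> ereal 0"
    using dist_le_pcost[OF assms(2), of I "[]"] by simp
  also have "\<dots> \<le> ereal x"
    using assms(3) by simp
  finally show ?thesis
    using wf_instD(8)[OF assms(1)] assms(2) by auto
qed

text \<open>Every prefix of a walk of cost at most x from a root ends within distance x.\<close>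

lemma walk_restrict_dist:
  assumes "wf_inst I" "r \<in> roots I" "walk (tail I) (head I) (iE I) r p v" "real (pcost I p) \<le> x"
  shows "walk (tail I) (head I) (iE (restrict_dist I x)) r p v"
  using assms(3,4)
proof (induction p arbitrary: v rule: rev_induct)
  case Nil
  then show ?case
    by simp
next
  case (snoc e p)
  then have e: "e \<in> iE I" "head I e = v" and p: "walk (tail I) (head I) (iE I) r p (tail I e)"
    by auto
  have "walk (tail I) (head I) (iE I) r (p @ [e]) (head I e)"
    using p e by simp
  then have "dist I (roots I) (head I e) \<le> ereal (real (pcost I (p @ [e])))"
    "dist I (roots I) (tail I e) \<le> ereal (real (pcost I p))"
    using dist_le_pcost[OF assms(2)] p by blast+
  moreover have "real (pcost I p) \<le> x" "real (pcost I (p @ [e])) \<le> x"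
    using snoc.prems(2) by simp_all
  ultimately have "dist I (roots I) (tail I e) \<le> ereal x" "dist I (roots I) (head I e) \<le> ereal x"
    by (meson ereal_less_eq(3) order_trans)+
  then have "e \<in> iE (restrict_dist I x)"
    using e(1) wf_instD(5,6)[OF assms(1)] by (simp add: inner_edges_def)
  then show ?case
    using snoc.IH[OF p] snoc.prems(2) e by simp
qed

lemma dist_restrict_dist_le:
  assumes "wf_inst I" "v \<in> iV (restrict_dist I x)"
  shows "dist (restrict_dist I x) (roots (restrict_dist I x)) v \<le> ereal x"
proof -
  have "dist I (roots I) v \<le> ereal x"
    using assms(2) by simp
  then obtain r p where r: "r \<in> roots I" and p: "walk (tail I) (head I) (iE I) r p v"
    and d: "dist I (roots I) v = ereal (real (pcost I p))"
    by (rule dist_attained)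
  have px: "real (pcost I p) \<le> x"
    using d \<open>dist I (roots I) v \<le> ereal x\<close> by simp
  then have "0 \<le> x"
    using of_nat_0_le_iff order_trans by blast
  then have "r \<in> roots (restrict_dist I x)"
    using roots_in_restrict_dist[OF assms(1) r] r by simp
  moreover have "walk (tail I) (head I) (iE (restrict_dist I x)) r p v"
    using walk_restrict_dist[OF assms(1) r p px] .
  ultimately have "dist (restrict_dist I x) (roots (restrict_dist I x)) v \<le> ereal (real (pcost I p))"
    using dist_le_pcost[of r _ "restrict_dist I x" p v] by (simp add: pcost_def)
  then show ?thesis
    using px by (meson ereal_less_eq(3) order_trans)
qed

lemma contract_sub_simps [simp]:
  "iV (contract_sub J Vt C rT) = C \<union> {rT}"
  "iE (contract_sub J Vt C rT) = {e \<in> iE J. tail J e \<in> C \<union> Vt \<and> head J e \<in> C \<union> Vt}"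
  "tail (contract_sub J Vt C rT) = (\<lambda>e. if tail J e \<in> Vt then rT else tail J e)"
  "head (contract_sub J Vt C rT) = (\<lambda>e. if head J e \<in> Vt then rT else head J e)"
  "cost (contract_sub J Vt C rT) = cost J"
  "roots (contract_sub J Vt C rT) = {rT} \<union> (roots J \<inter> C)"
  "terms (contract_sub J Vt C rT) = terms J \<inter> C"
  by (simp_all add: contract_sub_def)

lemma walk_contract_sub:
  assumes "walk (tail J) (head J) S a q t" "\<forall>e\<in>set q. head J e \<in> C" "C \<inter> Vt = {}"
    "a \<in> C \<union> Vt" "t \<in> C"
  shows "walk (tail (contract_sub J Vt C rT)) (head (contract_sub J Vt C rT))
           {e \<in> S. tail J e \<in> C \<union> Vt \<and> head J e \<in> C \<union> Vt \<and> (tail J e \<in> C \<or> head J e \<in> C)}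
           (if a \<in> Vt then rT else a) q t"
  using assms
proof (induction q arbitrary: a)
  case Nil
  then show ?case
    by auto
next
  case (Cons e q)
  then have "tail J e = a" "head J e \<in> C" "head J e \<notin> Vt"
    by auto
  moreover have "walk (tail (contract_sub J Vt C rT)) (head (contract_sub J Vt C rT))
      {e \<in> S. tail J e \<in> C \<union> Vt \<and> head J e \<in> C \<union> Vt \<and> (tail J e \<in> C \<or> head J e \<in> C)}
      (head J e) q t"
    using Cons.IH[of "head J e"] Cons.prems calculation by auto
  ultimately show ?case
    using Cons.prems by auto
qed

lemma walk_uncontract_sub:
  assumes "walk (tail (contract_sub J Vt C rT)) (head (contract_sub J Vt C rT)) S \<rho> q t"
    "t \<in> C" "rT \<notin> C" "C \<inter> Vt = {}" "\<forall>e\<in>S. tail J e \<in> C \<union> Vt \<and> head J e \<in> C \<union> Vt"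
  shows "(\<exists>u\<in>Vt. \<exists>q'. walk (tail J) (head J) S u q' t)
    \<or> (\<rho> \<in> C \<and> walk (tail J) (head J) S \<rho> q t)"
  using assms
proof (induction q arbitrary: \<rho>)
  case Nil
  then show ?case
    by auto
next
  case (Cons e q)
  let ?head = "if head J e \<in> Vt then rT else head J e"
  have e: "e \<in> S" "\<rho> = (if tail J e \<in> Vt then rT else tail J e)"
    and q: "walk (tail (contract_sub J Vt C rT)) (head (contract_sub J Vt C rT)) S ?head q t"
    using Cons.prems(1) by auto
  from Cons.IH[OF q Cons.prems(2-)] show ?case
  proof
    assume "\<exists>u\<in>Vt. \<exists>q'. walk (tail J) (head J) S u q' t"
    then show ?thesis ..
  next
    assume "?head \<in> C \<and> walk (tail J) (head J) S ?head q t"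
    then have w: "walk (tail J) (head J) S (head J e) q t"
      using Cons.prems(3) by (auto split: if_splits)
    show ?thesis
    proof (cases "tail J e \<in> Vt")
      case True
      then have "walk (tail J) (head J) S (tail J e) (e # q) t"
        using e(1) w by simp
      then show ?thesis
        using True by blast
    next
      case False
      then have "\<rho> \<in> C"
        using e Cons.prems(5) by auto
      then show ?thesis
        using False e w by simp
    qed
  qed
qed

lemma wf_restrict_dist: "wf_inst I \<Longrightarrow> wf_inst (restrict_dist I x)"
  unfolding wf_inst_def by (auto simp: inner_edges_def intro: finite_subset)

lemma sp_arborescencesD:
  assumes "sp_arborescences J A" "r \<in> roots J"
  shows "A r \<subseteq> iE J"
    and "\<forall>e\<in>A r. head J e \<noteq> r \<and> tail J e \<in> arb_verts J (A r) r"
    and "\<forall>v\<in>arb_verts J (A r) r - {r}. \<exists>!e. e \<in> A r \<and> head J e = v"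
    and "\<forall>v\<in>arb_verts J (A r) r. \<exists>p. walk (tail J) (head J) (A r) r p v
           \<and> ereal (real (pcost J p)) = dist J (roots J) v"
  using conjunct1[OF assms(1)[unfolded sp_arborescences_def]] assms(2) by simp_all

text \<open>Walks from r inside A r are unique, so each is the shortest path given by the arborescence.\<close>

lemma sp_arborescence_walk_cost:
  assumes "sp_arborescences J A" "r \<in> roots J" "walk (tail J) (head J) (A r) r p v"
  shows "ereal (real (pcost J p)) = dist J (roots J) v"
proof -
  note arb = sp_arborescencesD[OF assms(1,2)]
  have "v \<in> arb_verts J (A r) r"
    using walk_last[OF assms(3)] walk_edges_subset[OF assms(3)] unfolding arb_verts_def by auto
  then obtain q where q: "walk (tail J) (head J) (A r) r q v"
    "ereal (real (pcost J q)) = dist J (roots J) v"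
    using arb(4) by blast
  have "\<forall>e\<in>A r. \<forall>e'\<in>A r. head J e = head J e' \<longrightarrow> e = e'"
  proof (intro ballI impI)
    fix e e' assume "e \<in> A r" "e' \<in> A r" "head J e = head J e'"
    moreover have "head J e \<in> arb_verts J (A r) r - {r}"
      using \<open>e \<in> A r\<close> arb(2) unfolding arb_verts_def by auto
    ultimately show "e = e'"
      using arb(3) by metis
  qed
  then have "p = q"
    using walk_unique[OF assms(3) q(1)] arb(2) by blast
  then show ?thesis
    using q(2) by simp
qed

lemma good_separatorD:
  assumes "good_separator J A P F"
  shows "\<And>r. r \<in> roots J \<Longrightarrow> finite (P r) \<and> card (P r) \<le> 4"
    and "\<And>r p. r \<in> roots J \<Longrightarrow> p \<in> P r \<Longrightarrow> \<exists>v. walk (tail J) (head J) (A r) r p v"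
    and "\<And>C. C \<in> comps J (iV J - (\<Union>r\<in>roots J. T_verts J P r))
           \<Longrightarrow> 2 * card (C \<inter> terms J) \<le> card (terms J)"
  using assms unfolding good_separator_def Let_def by simp_all

lemma T_edges_subset:
  assumes "good_separator J A P F" "r \<in> roots J"
  shows "T_edges P r \<subseteq> A r"
proof
  fix e assume "e \<in> T_edges P r"
  then obtain p where p: "p \<in> P r" and e: "e \<in> set p"
    unfolding T_edges_def by blast
  obtain v where "walk (tail J) (head J) (A r) r p v"
    using good_separatorD(2)[OF assms p] by blast
  then show "e \<in> A r"
    using e walk_edges_subset by fast
qed

lemma T_verts_reachable:
  assumes "good_separator J A P F" "r \<in> roots J" "u \<in> T_verts J P r"
  shows "\<exists>p. walk (tail J) (head J) (T_edges P r) r p u"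
proof (cases "u = r")
  case True
  then show ?thesis
    by (auto intro: exI[of _ "[]"])
next
  case False
  then obtain e p where ep: "p \<in> P r" "e \<in> set p" "u = head J e"
    using assms(3) unfolding T_verts_def T_edges_def by (auto split: if_splits)
  obtain v where "walk (tail J) (head J) (A r) r p v"
    using good_separatorD(2)[OF assms(1,2) ep(1)] by blast
  moreover obtain a b where p: "p = a @ e # b"
    using split_list[OF ep(2)] by blast
  ultimately have w: "walk (tail J) (head J) (A r) r (a @ [e]) u"
    using ep(3) by auto
  have "set (a @ [e]) \<subseteq> set p"
    using p by auto
  moreover have "set p \<subseteq> T_edges P r"
    using ep(1) unfolding T_edges_def by blast
  ultimately show ?thesis
    using walk_mono[OF w] by (meson order_trans)
qed

text \<open>The partial arborescence consists of at most four paths of length at most x per used root.\<close>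

lemma setcost_T_edges_le:
  assumes "wf_inst J" "sp_arborescences J A" "good_separator J A P F"
    and "\<forall>v\<in>iV J. dist J (roots J) v \<le> ereal x" "0 \<le> x"
  shows "real (setcost J (\<Union>r\<in>roots J. T_edges P r)) \<le> 4 * x * real (card {r \<in> roots J. P r \<noteq> {}})"
proof -
  have finR: "finite (roots J)"
    using assms(1) by (rule wf_instD)
  have path_cost: "real (pcost J p) \<le> x" if r: "r \<in> roots J" and p: "p \<in> P r" for r p
  proof -
    obtain v where w: "walk (tail J) (head J) (A r) r p v"
      using good_separatorD(2)[OF assms(3) r p] by blast
    have "set p \<subseteq> iE J"
      using walk_edges_subset[OF w] sp_arborescencesD(1)[OF assms(2) r] by blast
    then have "v \<in> iV J"
      using walk_last[OF w] r wf_instD(6,8)[OF assms(1)] by blast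
    then have "ereal (real (pcost J p)) \<le> ereal x"
      using sp_arborescence_walk_cost[OF assms(2) r w] assms(4) by simp
    then show ?thesis
      by simp
  qed
  have root_cost: "real (setcost J (T_edges P r)) \<le> (if P r \<noteq> {} then 4 * x else 0)"
    if r: "r \<in> roots J" for r
  proof -
    have finP: "finite (P r)" and cardP: "card (P r) \<le> 4"
      using good_separatorD(1)[OF assms(3) r] by auto
    have "setcost J (T_edges P r) \<le> (\<Sum>p\<in>P r. setcost J (set p))"
      unfolding T_edges_def setcost_def using finP by (intro sum_UN_le) auto
    also have "\<dots> \<le> (\<Sum>p\<in>P r. pcost J p)"
      by (intro sum_mono setcost_set_le_pcost)
    finally have "real (setcost J (T_edges P r)) \<le> (\<Sum>p\<in>P r. real (pcost J p))"
      unfolding of_nat_sum[symmetric] of_nat_le_iff .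
    also have "\<dots> \<le> real (card (P r)) * x"
      using sum_bounded_above[of "P r" "\<lambda>p. real (pcost J p)" x] path_cost[OF r] by simp
    also have "\<dots> \<le> (if P r \<noteq> {} then 4 * x else 0)"
      using mult_right_mono[OF _ assms(5), of "real (card (P r))" 4] cardP by auto
    finally show ?thesis .
  qed
  have "setcost J (\<Union>r\<in>roots J. T_edges P r) \<le> (\<Sum>r\<in>roots J. setcost J (T_edges P r))"
    unfolding setcost_def using finR good_separatorD(1)[OF assms(3)]
    by (intro sum_UN_le) (auto simp: T_edges_def)
  then have "real (setcost J (\<Union>r\<in>roots J. T_edges P r)) \<le> (\<Sum>r\<in>roots J. real (setcost J (T_edges P r)))"
    unfolding of_nat_sum[symmetric] of_nat_le_iff .
  also have "\<dots> \<le> (\<Sum>r\<in>roots J. if P r \<noteq> {} then 4 * x else 0)"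
    by (intro sum_mono root_cost)
  also have "\<dots> = 4 * x * real (card {r \<in> roots J. P r \<noteq> {}})"
    using sum.inter_filter[OF finR, of "\<lambda>_. 4 * x" "\<lambda>r. P r \<noteq> {}"] by (simp add: mult.commute)
  finally show ?thesis .
qed

lemma ocost_le_Some:
  assumes "ocost I res \<le> ocost I (Some G)"
  obtains F where "res = Some F" "setcost I F \<le> setcost I G"
  using assms by (cases res) (auto simp: ocost_def)

lemma combined_cost_le:
  fixes T x opt u c :: real and a b :: "'a \<Rightarrow> real"
  assumes "T \<le> 4 * x * u" "x \<le> 2 * opt" "0 \<le> u" "0 \<le> c"
    and "\<And>C. C \<in> Cs \<Longrightarrow> a C \<le> c * b C" "(\<Sum>C\<in>Cs. b C) \<le> opt"
  shows "T + (\<Sum>C\<in>Cs. a C) \<le> (8 * u + c) * opt"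
proof -
  have "(\<Sum>C\<in>Cs. a C) \<le> c * (\<Sum>C\<in>Cs. b C)"
    using assms(5) by (simp add: sum_distrib_left sum_mono)
  also have "\<dots> \<le> c * opt"
    using assms(4,6) by (rule mult_left_mono[rotated])
  finally have "(\<Sum>C\<in>Cs. a C) \<le> c * opt" .
  moreover have "T \<le> 4 * (2 * opt) * u"
    using assms(1) mult_right_mono[OF assms(2) assms(3)] by simp
  ultimately show ?thesis
    by (simp add: algebra_simps)
qed

text \<open>One recursive step of DST: I' is the instance restricted to distance x, Te and Vt are the
  edges (without F) and vertices of the partial arborescence T, and Cs are the components of
  I' - Vt that contain terminals, with contracted vertices rT C.\<close>

locale separation_step =
  fixes I :: "('v, 'e) inst" and x :: real and A :: "'v \<Rightarrow> 'e set" and P :: "'v \<Rightarrow> 'e list set"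
    and F :: "'e set" and I' :: "('v, 'e) inst" and Te :: "'e set" and Vt :: "'v set"
    and Cs :: "'v set set" and rT :: "'v set \<Rightarrow> 'v"
  assumes wf: "wf_inst I" and x_nonneg: "0 \<le> x"
    and I'_def: "I' = restrict_dist I x"
    and arbs: "sp_arborescences I' A" and sep: "good_separator I' A P F"
    and Te_def: "Te = (\<Union>r\<in>roots I'. T_edges P r)"
    and Vt_def: "Vt = (\<Union>r\<in>roots I'. T_verts I' P r)"
    and Cs_def: "Cs = {C \<in> comps I' (iV I' - Vt). C \<inter> terms I' \<noteq> {}}"
    and rT_fresh: "\<forall>C\<in>Cs. rT C \<notin> C"
begin

abbreviation sub :: "'v set \<Rightarrow> ('v, 'e) inst" where
  "sub C \<equiv> contract_sub I' Vt C (rT C)"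

abbreviation used_roots :: "'v set" where
  "used_roots \<equiv> {r \<in> roots I'. P r \<noteq> {}}"

lemma restricted_simps [simp]: "tail I' = tail I" "head I' = head I" "cost I' = cost I"
  by (simp_all add: I'_def)

lemma wf_restricted: "wf_inst I'"
  unfolding I'_def using wf by (rule wf_restrict_dist)

lemma restricted_subset: "iV I' \<subseteq> iV I" "iE I' \<subseteq> iE I" "roots I' \<subseteq> roots I" "terms I' \<subseteq> terms I"
  by (auto simp: I'_def inner_edges_def)

lemma finite_roots: "finite (roots I)" and finite_edges: "finite (iE I)"
  using wf_instD(3,2)[OF wf] .

lemma Cs_comps: "C \<in> Cs \<Longrightarrow> C \<in> comps I' (iV I' - Vt)"
  by (simp add: Cs_def)

lemma Cs_disjoint_Vt: "C \<in> Cs \<Longrightarrow> C \<inter> Vt = {}"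
  using comps_subset[OF Cs_comps] by blast

lemma finite_Cs: "finite Cs"
proof (rule finite_subset)
  show "Cs \<subseteq> Pow (iV I')"
    using comps_subset[OF Cs_comps] by blast
  show "finite (Pow (iV I'))"
    using wf_instD(1)[OF wf_restricted] by simp
qed

lemma wf_sub:
  assumes "C \<in> Cs"
  shows "wf_inst (sub C)"
proof -
  have "C \<subseteq> iV I'"
    using comps_subset[OF Cs_comps[OF assms]] by blast
  then have "finite C"
    using wf_instD(1)[OF wf_restricted] by (rule finite_subset)
  moreover have "finite (iE (sub C))"
    using wf_instD(2)[OF wf_restricted] by simp
  moreover have "rT C \<notin> C"
    using rT_fresh assms by blast
  ultimately show ?thesis
    using wf_instD(7-9)[OF wf_restricted] unfolding wf_inst_def by auto
qed

lemma terms_sub_nonempty: "C \<in> Cs \<Longrightarrow> terms (sub C) \<noteq> {}"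
  by (auto simp: Cs_def)

lemma card_terms_sub: "C \<in> Cs \<Longrightarrow> 2 * card (terms (sub C)) \<le> card (terms I')"
  using good_separatorD(3)[OF sep, of C] Cs_comps[of C] unfolding Vt_def
  by (simp add: Int_commute)

lemma card_terms_restricted_le: "card (terms I') \<le> card (terms I)"
  using wf_instD(4)[OF wf] restricted_subset(4) by (rule card_mono)

lemma sum_card_terms_sub: "(\<Sum>C\<in>Cs. card (terms (sub C))) \<le> card (terms I')"
proof -
  have "Cs \<subseteq> comps I' (iV I' - Vt)"
    using Cs_comps by blast
  then show ?thesis
    using sum_card_Int_comps_le wf_instD(4)[OF wf_restricted] by simp
qed

text \<open>The used roots lie on the partial arborescence and are replaced by the single root rT C.\<close>

lemma card_roots_sub:
  assumes "C \<in> Cs"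
  shows "card (roots (sub C)) + card used_roots \<le> card (roots I) + 1"
proof -
  have used_Vt: "used_roots \<subseteq> Vt"
    unfolding Vt_def T_verts_def by auto
  have fin: "finite (roots I' \<inter> C)" "finite used_roots"
    using finite_roots restricted_subset(3) by (auto intro: finite_subset)
  have "card (roots (sub C)) \<le> card (roots I' \<inter> C) + 1"
    using fin(1) by (simp add: card_insert_if)
  moreover have "card (roots I' \<inter> C) + card used_roots = card ((roots I' \<inter> C) \<union> used_roots)"
    using fin Cs_disjoint_Vt[OF assms] used_Vt by (intro card_Un_disjoint[symmetric]) auto
  moreover have "\<dots> \<le> card (roots I)"
    using finite_roots restricted_subset(3) by (intro card_mono) auto
  ultimately show ?thesis
    by linarith
qed

lemma card_used_roots_le: "card used_roots \<le> card (roots I)"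
  using finite_roots restricted_subset(3) by (intro card_mono) auto

lemma Te_subset: "Te \<subseteq> iE I'"
proof -
  have "T_edges P r \<subseteq> iE I'" if "r \<in> roots I'" for r
    using T_edges_subset[OF sep that] sp_arborescencesD(1)[OF arbs that] by (rule order_trans)
  then show ?thesis
    unfolding Te_def by blast
qed

lemma setcost_Te: "real (setcost I Te) \<le> 4 * x * real (card used_roots)"
proof -
  have "\<forall>v\<in>iV I'. dist I' (roots I') v \<le> ereal x"
    unfolding I'_def using dist_restrict_dist_le[OF wf] by blast
  then show ?thesis
    using setcost_T_edges_le[OF wf_restricted arbs sep _ x_nonneg]
    unfolding Te_def setcost_def by simp
qed

lemma Vt_reachable:
  assumes "u \<in> Vt"
  obtains r p where "r \<in> roots I" "walk (tail I) (head I) Te r p u"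
proof -
  obtain r where r: "r \<in> roots I'" "u \<in> T_verts I' P r"
    using assms unfolding Vt_def by blast
  then obtain p where p: "walk (tail I) (head I) (T_edges P r) r p u"
    using T_verts_reachable[OF sep] by fastforce
  have "set p \<subseteq> Te"
    using walk_edges_subset[OF p] r(1) unfolding Te_def by blast
  then have "walk (tail I) (head I) Te r p u"
    by (rule walk_mono[OF p])
  then show thesis
    using that r(1) restricted_subset(3) by blast
qed

lemma feasible_combine:
  assumes terms_close: "\<forall>t\<in>terms I. dist I (roots I) t \<le> ereal x"
    and sub_feasible: "\<And>C. C \<in> Cs \<Longrightarrow> feasible (sub C) (G C)"
  shows "feasible I (Te \<union> (\<Union>C\<in>Cs. G C))"
proof -
  let ?G = "Te \<union> (\<Union>C\<in>Cs. G C)"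
  have G_edges: "G C \<subseteq> iE I'" if "C \<in> Cs" for C
    using sub_feasible[OF that] unfolding feasible_def by auto
  have from_Vt: "\<exists>r\<in>roots I. \<exists>p. walk (tail I) (head I) ?G r p t"
    if u: "u \<in> Vt" and q: "walk (tail I) (head I) ?G u q t" for u q t
  proof -
    obtain r p where r: "r \<in> roots I" and p: "walk (tail I) (head I) Te r p u"
      using Vt_reachable[OF u] .
    have "walk (tail I) (head I) ?G r p u"
      using walk_mono[OF p] walk_edges_subset[OF p] by blast
    then have "walk (tail I) (head I) ?G r (p @ q) t"
      using q by auto
    then show ?thesis
      using r by blast
  qed
  have "\<exists>r\<in>roots I. \<exists>p. walk (tail I) (head I) ?G r p t" if t: "t \<in> terms I" for t
  proof (cases "t \<in> Vt")
    case True
    then show ?thesis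
      using from_Vt[of t "[]" t] by simp
  next
    case False
    have tI': "t \<in> terms I'" "t \<in> iV I'"
      using t terms_close wf_instD(9)[OF wf] unfolding I'_def by auto
    then obtain C where C: "C \<in> comps I' (iV I' - Vt)" "t \<in> C"
      using comps_cover[of t "iV I' - Vt" I'] False by blast
    then have CCs: "C \<in> Cs"
      using tI' unfolding Cs_def by blast
    have "t \<in> terms (sub C)"
      using C(2) tI'(1) by simp
    then obtain \<rho> q where \<rho>: "\<rho> \<in> roots (sub C)"
      and q: "walk (tail (sub C)) (head (sub C)) (G C) \<rho> q t"
      using sub_feasible[OF CCs] unfolding feasible_def by blast
    have "\<forall>e\<in>G C. tail I' e \<in> C \<union> Vt \<and> head I' e \<in> C \<union> Vt"
      using sub_feasible[OF CCs] unfolding feasible_def by auto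
    then have "(\<exists>u\<in>Vt. \<exists>q'. walk (tail I') (head I') (G C) u q' t)
        \<or> (\<rho> \<in> C \<and> walk (tail I') (head I') (G C) \<rho> q t)"
      using walk_uncontract_sub[OF q C(2) _ Cs_disjoint_Vt[OF CCs]] rT_fresh CCs by blast
    moreover have "G C \<subseteq> ?G"
      using CCs by blast
    ultimately consider u q' where "u \<in> Vt" "walk (tail I) (head I) ?G u q' t"
      | "\<rho> \<in> C" "walk (tail I) (head I) ?G \<rho> q t"
      using walk_edges_subset walk_mono by (metis restricted_simps(1,2) order_trans)
    then show ?thesis
    proof cases
      case 1
      then show ?thesis
        by (rule from_Vt)
    next
      case 2
      then have "\<rho> \<in> roots I"
        using \<rho> rT_fresh CCs restricted_subset(3) by auto
      then show ?thesis
        using 2 by blast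
    qed
  qed
  moreover have "?G \<subseteq> iE I"
    using Te_subset G_edges restricted_subset(2) by blast
  ultimately show ?thesis
    unfolding feasible_def by blast
qed

lemma setcost_combine_le:
  assumes "\<And>C. C \<in> Cs \<Longrightarrow> feasible (sub C) (G C)"
  shows "setcost I (Te \<union> (\<Union>C\<in>Cs. G C)) \<le> setcost I Te + (\<Sum>C\<in>Cs. setcost I (G C))"
proof -
  have fin: "finite (G C)" if "C \<in> Cs" for C
    using assms[OF that] finite_edges restricted_subset(2) unfolding feasible_def
    by (auto intro: finite_subset)
  have "finite Te"
    using Te_subset restricted_subset(2) finite_edges by (blast intro: finite_subset)
  then have "setcost I (Te \<union> (\<Union>C\<in>Cs. G C)) \<le> setcost I Te + setcost I (\<Union>C\<in>Cs. G C)"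
    unfolding setcost_def using fin finite_Cs by (simp add: sum_Un_nat)
  also have "setcost I (\<Union>C\<in>Cs. G C) \<le> (\<Sum>C\<in>Cs. setcost I (G C))"
    unfolding setcost_def by (rule sum_UN_le[OF finite_Cs fin])
  finally show ?thesis
    by simp
qed

text \<open>Requiring an endpoint in C, not merely in C \<union> Vt, makes these sets disjoint for distinct
  components.\<close>

definition restrict_sol :: "'e set \<Rightarrow> 'v set \<Rightarrow> 'e set" where
  "restrict_sol Fo C = {e \<in> Fo \<inter> iE I'. tail I' e \<in> C \<union> Vt \<and> head I' e \<in> C \<union> Vt
                                        \<and> (tail I' e \<in> C \<or> head I' e \<in> C)}"

lemma feasible_restrict_sol:
  assumes Fo: "feasible I Fo" "real (setcost I Fo) \<le> x" and C: "C \<in> Cs"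
  shows "feasible (sub C) (restrict_sol Fo C)"
proof -
  let ?S = "Fo \<inter> iE I'"
  have "\<exists>r\<in>roots (sub C). \<exists>p. walk (tail (sub C)) (head (sub C)) (restrict_sol Fo C) r p t"
    if t: "t \<in> terms (sub C)" for t
  proof -
    have tC: "t \<in> C" and tI: "t \<in> terms I"
      using t restricted_subset(4) by auto
    obtain r q where r: "r \<in> roots I" and q: "walk (tail I) (head I) (iE I) r q t"
      and qFo: "set q \<subseteq> Fo" and "pcost I q \<le> setcost I Fo"
      using feasible_cheap_walk[OF finite_edges Fo(1) tI] .
    then have "real (pcost I q) \<le> x"
      using Fo(2) by linarith
    then have qI': "walk (tail I) (head I) (iE I') r q t"
      unfolding I'_def by (rule walk_restrict_dist[OF wf r q])
    have "set q \<subseteq> ?S"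
      using walk_edges_subset[OF qI'] qFo by blast
    then have w: "walk (tail I) (head I) ?S r q t"
      by (rule walk_mono[OF qI'])
    have rI': "r \<in> roots I'"
      using roots_in_restrict_dist[OF wf r x_nonneg] r unfolding I'_def by simp
    \<comment> \<open>a final segment of q that avoids Vt lies in C and survives the contraction\<close>
    have sub_walk: "(u \<in> Vt \<or> u \<in> C)
        \<and> walk (tail (sub C)) (head (sub C)) (restrict_sol Fo C) (if u \<in> Vt then rT C else u) p t"
      if p: "walk (tail I) (head I) ?S u p t" and avoid: "\<forall>e\<in>set p. head I e \<notin> Vt"
        and u: "u \<in> iV I'" for u p
    proof -
      have "\<forall>e\<in>set p. head I e \<in> iV I' - Vt"
        using avoid walk_edges_subset[OF p] wf_instD(6)[OF wf_restricted] by auto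
      then have in_C: "(\<forall>e\<in>set p. head I e \<in> C) \<and> (u \<in> iV I' - Vt \<longrightarrow> u \<in> C)"
        using walk_in_comp[OF Cs_comps[OF C], of ?S u p t] p tC by simp
      then have "u \<in> Vt \<or> u \<in> C"
        using u by blast
      moreover have "walk (tail (sub C)) (head (sub C)) (restrict_sol Fo C) (if u \<in> Vt then rT C else u) p t"
        unfolding restrict_sol_def
        by (rule walk_contract_sub) (use p in_C calculation tC Cs_disjoint_Vt[OF C] in auto)
      ultimately show ?thesis ..
    qed
    have "t \<notin> Vt"
      using tC Cs_disjoint_Vt[OF C] by blast
    from walk_split_at_last_visit[OF w this] show ?thesis
    proof (elim disjE exE conjE)
      assume "r \<notin> Vt" "\<forall>e\<in>set q. head I e \<notin> Vt"
      moreover have "r \<in> iV I'"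
        using rI' wf_instD(8)[OF wf_restricted] by blast
      ultimately have "r \<in> C" "walk (tail (sub C)) (head (sub C)) (restrict_sol Fo C) r q t"
        using sub_walk[OF w] by auto
      moreover have "r \<in> roots (sub C)"
        using rI' \<open>r \<in> C\<close> by simp
      ultimately show ?thesis
        by blast
    next
      fix p1 p2 u
      assume p1: "walk (tail I) (head I) ?S r p1 u" and "u \<in> Vt"
        and p2: "walk (tail I) (head I) ?S u p2 t" "\<forall>e\<in>set p2. head I e \<notin> Vt"
      have "u \<in> iV I'"
        using walk_last[OF p1] walk_edges_subset[OF p1] rI' wf_instD(6,8)[OF wf_restricted] by auto
      then show ?thesis
        using sub_walk[OF p2] \<open>u \<in> Vt\<close> by auto
    qed
  qed
  moreover have "restrict_sol Fo C \<subseteq> iE (sub C)"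
    unfolding restrict_sol_def by auto
  ultimately show ?thesis
    unfolding feasible_def by blast
qed

lemma sum_setcost_restrict_sol_le:
  assumes "Fo \<subseteq> iE I"
  shows "(\<Sum>C\<in>Cs. setcost I (restrict_sol Fo C)) \<le> setcost I Fo"
proof -
  have disjoint: "restrict_sol Fo C \<inter> restrict_sol Fo C' = {}"
    if C: "C \<in> Cs" "C' \<in> Cs" "C \<noteq> C'" for C C'
  proof (rule ccontr)
    assume "restrict_sol Fo C \<inter> restrict_sol Fo C' \<noteq> {}"
    then obtain z where "z \<in> C" "z \<in> C' \<union> Vt"
      unfolding restrict_sol_def by blast
    then have "z \<in> C'"
      using Cs_disjoint_Vt[OF C(1)] by blast
    then show False
      using comps_disjoint[OF Cs_comps[OF C(1)] Cs_comps[OF C(2)] \<open>z \<in> C\<close>] C(3) by blast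
  qed
  have fin: "finite (restrict_sol Fo C)" for C
    using finite_edges restricted_subset(2) unfolding restrict_sol_def by (blast intro: finite_subset)
  have "(\<Sum>C\<in>Cs. setcost I (restrict_sol Fo C)) = setcost I (\<Union>C\<in>Cs. restrict_sol Fo C)"
    unfolding setcost_def using finite_Cs fin disjoint by (intro sum.UNION_disjoint[symmetric]) auto
  also have "\<dots> \<le> setcost I Fo"
    unfolding setcost_def using assms finite_edges
    by (intro sum_mono2) (auto simp: restrict_sol_def intro: finite_subset)
  finally show ?thesis .
qed

text \<open>An optimal solution has cost opt \<le> x, so it lies within distance x of the roots and
  survives the restriction; its parts in the components are disjoint.\<close>

lemma subinstance_optima:
  assumes "\<exists>F. feasible I F" "real (optv I) \<le> x"
  shows "(\<Sum>C\<in>Cs. optv (sub C)) \<le> optv I"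
    and "\<And>C. C \<in> Cs \<Longrightarrow> \<exists>F. feasible (sub C) F"
    and "\<And>C. C \<in> Cs \<Longrightarrow> real (optv (sub C)) \<le> x"
proof -
  obtain Fo where Fo: "feasible I Fo" "setcost I Fo = optv I"
    using optv_attained[OF finite_edges assms(1)] .
  then have feas: "feasible (sub C) (restrict_sol Fo C)" if "C \<in> Cs" for C
    using feasible_restrict_sol[OF Fo(1) _ that] assms(2) by simp
  then show "\<And>C. C \<in> Cs \<Longrightarrow> \<exists>F. feasible (sub C) F"
    by blast
  have "optv (sub C) \<le> setcost I (restrict_sol Fo C)" if C: "C \<in> Cs" for C
    using optv_le[OF wf_instD(2)[OF wf_sub[OF C]] feas[OF C]] by (simp add: setcost_def)
  then have "(\<Sum>C\<in>Cs. optv (sub C)) \<le> (\<Sum>C\<in>Cs. setcost I (restrict_sol Fo C))"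
    by (rule sum_mono)
  also have "\<dots> \<le> optv I"
    using sum_setcost_restrict_sol_le[of Fo] Fo unfolding feasible_def by simp
  finally show sum_le: "(\<Sum>C\<in>Cs. optv (sub C)) \<le> optv I" .
  show "real (optv (sub C)) \<le> x" if C: "C \<in> Cs" for C
  proof -
    have "optv (sub C) \<le> (\<Sum>C\<in>Cs. optv (sub C))"
      using finite_Cs C by (intro member_le_sum) auto
    then show ?thesis
      using sum_le assms(2) by linarith
  qed
qed

lemma subinstance_hyps:
  assumes C: "C \<in> Cs" and "card (terms I) \<le> 2 ^ Suc l'"
  shows "wf_inst (sub C)" "terms (sub C) \<noteq> {}" "card (terms (sub C)) \<le> 2 ^ l'"
proof -
  show "wf_inst (sub C)"
    using C by (rule wf_sub)
  show "terms (sub C) \<noteq> {}"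
    using C by (rule terms_sub_nonempty)
  show "card (terms (sub C)) \<le> 2 ^ l'"
    using card_terms_sub[OF C] card_terms_restricted_le assms(2) by simp
qed

lemma second_branch_cost_le:
  assumes opt: "\<exists>F. feasible I F" "real (optv I) \<le> x" "x \<le> 2 * real (optv I)"
    and sub_feasible: "\<And>C. C \<in> Cs \<Longrightarrow> feasible (sub C) (G C)"
    and sub_cost: "\<And>C. C \<in> Cs \<Longrightarrow> real (setcost (sub C) (G C))
                     \<le> (8 * (real (card (roots (sub C))) + real l') + 1) * real (optv (sub C))"
  shows "real (setcost I (Te \<union> (\<Union>C\<in>Cs. G C)))
           \<le> (8 * (real (card (roots I)) + real (Suc l')) + 1) * real (optv I)"
proof -
  let ?u = "real (card used_roots)"
  let ?c = "8 * (real (card (roots I)) - ?u + real (Suc l')) + 1"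
  have "real (setcost I Te) + (\<Sum>C\<in>Cs. real (setcost I (G C))) \<le> (8 * ?u + ?c) * real (optv I)"
  proof (rule combined_cost_le[OF setcost_Te opt(3)])
    show "0 \<le> ?c"
      using card_used_roots_le by simp
    show "(\<Sum>C\<in>Cs. real (optv (sub C))) \<le> real (optv I)"
      using subinstance_optima(1)[OF opt(1,2)] unfolding of_nat_sum[symmetric] of_nat_le_iff .
    show "real (setcost I (G C)) \<le> ?c * real (optv (sub C))" if C: "C \<in> Cs" for C
    proof -
      have "8 * (real (card (roots (sub C))) + real l') + 1 \<le> ?c"
        using card_roots_sub[OF C] by simp
      then have "real (setcost (sub C) (G C)) \<le> ?c * real (optv (sub C))"
        using sub_cost[OF C] mult_right_mono[OF _ of_nat_0_le_iff] by (meson order_trans)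
      then show ?thesis
        by (simp add: setcost_def)
    qed
  qed simp
  moreover have "setcost I (Te \<union> (\<Union>C\<in>Cs. G C)) \<le> setcost I Te + (\<Sum>C\<in>Cs. setcost I (G C))"
    using sub_feasible by (rule setcost_combine_le)
  then have "real (setcost I (Te \<union> (\<Union>C\<in>Cs. G C)))
      \<le> real (setcost I Te) + (\<Sum>C\<in>Cs. real (setcost I (G C)))"
    unfolding of_nat_sum[symmetric] of_nat_add[symmetric] of_nat_le_iff .
  ultimately show ?thesis
    by (simp add: algebra_simps)
qed

end

lemma dst_run_feasible:
  assumes "dst_run I x res n" "wf_inst I" "res = Some G"
  shows "feasible I G"
  using assms
proof (induction arbitrary: G rule: dst_run.induct)
  case (single x I t r p)
  have "walk (tail I) (head I) (set p) r p t"
    using walk_mono[OF single(5)] by simp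
  then show ?case
    using single(3,4,8) walk_edges_subset[OF single(5)] unfolding feasible_def by auto
next
  case (recur x I res1 n1 I' A P F Te Vt Cs rT resC nC res2 res)
  note h = recur
  interpret separation_step I x A P F I' Te Vt Cs rT
    using h(1,5-10,16,17) by unfold_locales auto
  show ?case
  proof (cases "res = res1")
    case True
    then show ?thesis
      using h(15)[OF h(17)] h(18) by simp
  next
    case False
    then have "res2 = Some G"
      using h(12,18) by simp
    then have some: "\<forall>C\<in>Cs. resC C \<noteq> None" and G: "G = Te \<union> (\<Union>C\<in>Cs. the (resC C))"
      using h(11) by (auto split: if_splits)
    have "feasible (sub C) (the (resC C))" if C: "C \<in> Cs" for C
      using h(16) wf_sub[OF C] some C by auto
    then show ?thesis
      unfolding G by (rule feasible_combine[OF h(2)])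
  qed
qed auto

lemma dst_run_small: "dst_run I x res n \<Longrightarrow> x < 1 \<Longrightarrow> n = 1"
  by (cases rule: dst_run.cases) auto

lemma dst_run_calls:
  assumes "dst_run I x res n" "wf_inst I" "terms I \<noteq> {}" "card (terms I) \<le> 2 ^ l" "x \<le> 2 ^ k"
  shows "n \<le> card (terms I) * 2 ^ (2 * l + k)"
  using assms
proof (induction arbitrary: l k rule: dst_run.induct)
  case (infeas x I)
  then have "1 \<le> card (terms I)"
    using wf_instD(4) by (simp add: Suc_le_eq card_gt_0_iff)
  then show ?case
    using mult_le_mono[OF _ one_le_power[of "2::nat" "2 * l + k"]] by simp
next
  case (recur x I res1 n1 I' A P F Te Vt Cs rT resC nC res2 res)
  note h = recur
  interpret separation_step I x A P F I' Te Vt Cs rT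
    using h(1,5-10,16,17) by unfold_locales auto
  define N where "N = card (terms I)"
  have "N \<noteq> 0"
    using h(18) wf_instD(4)[OF wf] unfolding N_def by simp
  then have N2: "2 \<le> N"
    using h(3) unfolding N_def by linarith
  then obtain l' where l': "l = Suc l'"
    using h(19) unfolding N_def by (cases l) auto
  have terms_I': "card (terms I') \<le> N"
    unfolding N_def by (rule card_terms_restricted_le)
  have "nC C \<le> card (terms (sub C)) * 2 ^ (2 * l' + k)" if C: "C \<in> Cs" for C
    using h(16) C subinstance_hyps[OF C h(19)[unfolded l']] h(20) by blast
  then have "(\<Sum>C\<in>Cs. nC C) \<le> (\<Sum>C\<in>Cs. card (terms (sub C))) * 2 ^ (2 * l' + k)"
    by (simp add: sum_mono sum_distrib_right)
  also have "\<dots> \<le> N * 2 ^ (2 * l' + k)"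
    using sum_card_terms_sub terms_I' by simp
  finally have subcalls: "(\<Sum>C\<in>Cs. nC C) \<le> N * 2 ^ (2 * l' + k)" .
  have N_pow: "2 \<le> N * 2 ^ m" for m
  proof -
    have "N * 1 \<le> N * 2 ^ m"
      by (rule mult_le_mono2) simp
    then show ?thesis
      using N2 by linarith
  qed
  show ?case
  proof (cases k)
    case 0
    then have "n1 = 1"
      using dst_run_small[OF h(4)] h(20) by simp
    moreover have "2 \<le> N * 2 ^ (2 * l')"
      by (rule N_pow)
    ultimately show ?thesis
      using subcalls 0 l' unfolding N_def by (simp add: power_add)
  next
    case (Suc k')
    then have "n1 \<le> N * 2 ^ (2 * l + k')"
      using h(15)[OF h(17,18,19)] h(20) unfolding N_def by simp
    moreover have "2 \<le> N * 2 ^ (2 * l' + k')"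
      by (rule N_pow)
    ultimately show ?thesis
      using subcalls Suc l' unfolding N_def by (simp add: power_add)
  qed
qed simp

lemma dst_run_cost:
  assumes "dst_run I x res n" "wf_inst I" "terms I \<noteq> {}" "card (terms I) \<le> 2 ^ l"
    and "\<exists>F. feasible I F" "real (optv I) \<le> x"
  shows "\<exists>F. res = Some F
           \<and> real (setcost I F) \<le> (8 * (real (card (roots I)) + real l) + 1) * real (optv I)"
  using assms
proof (induction arbitrary: l rule: dst_run.induct)
  case (infeas x I)
  have "1 \<le> optv I"
    using optv_pos[OF infeas(2,5,3)] .
  then have "\<not> x < 1"
    using infeas(6) by linarith
  moreover have "dist I (roots I) t \<le> ereal x" if "t \<in> terms I" for t
  proof -
    have "dist I (roots I) t \<le> ereal (real (optv I))"
      using dist_le_optv[OF wf_instD(2)[OF infeas(2)] infeas(5) that] .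
    also have "\<dots> \<le> ereal x"
      using infeas(6) by simp
    finally show ?thesis .
  qed
  ultimately show ?case
    using infeas(1) not_le by blast
next
  case (single x I t r p)
  have fin: "finite (iE I)"
    using wf_instD(2)[OF single(7)] .
  obtain Fo where Fo: "feasible I Fo" "setcost I Fo = optv I"
    using optv_attained[OF fin single(10)] .
  have "t \<in> terms I"
    using single(3) by simp
  then obtain r' q where "r' \<in> roots I" "walk (tail I) (head I) (iE I) r' q t" "set q \<subseteq> Fo"
    "pcost I q \<le> setcost I Fo"
    using feasible_cheap_walk[OF fin Fo(1)] by blast
  then have "setcost I (set p) \<le> optv I"
    using setcost_set_le_pcost[of I p] single(6) Fo(2) by fastforce
  then have "real (setcost I (set p)) \<le> 1 * real (optv I)"
    by simp
  also have "\<dots> \<le> (8 * (real (card (roots I)) + real l) + 1) * real (optv I)"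
    by (intro mult_right_mono) auto
  finally show ?case
    by blast
next
  case (recur x I res1 n1 I' A P F Te Vt Cs rT resC nC res2 res)
  note h = recur
  interpret separation_step I x A P F I' Te Vt Cs rT
    using h(1,5-10,16,17) by unfold_locales auto
  let ?R = "real (card (roots I))" and ?opt = "real (optv I)"
  show ?case
  proof (cases "?opt \<le> x / 2")
    case True
    then obtain F1 where F1: "res1 = Some F1" "real (setcost I F1) \<le> (8 * (?R + real l) + 1) * ?opt"
      using h(15)[OF h(17-20)] by blast
    have "ocost I res \<le> ocost I (Some F1)"
      using h(13) F1(1) by simp
    then obtain F where F: "res = Some F" "setcost I F \<le> setcost I F1"
      by (rule ocost_le_Some)
    then have "real (setcost I F) \<le> real (setcost I F1)"
      by simp
    then show ?thesis
      using F(1) F1(2) by auto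
  next
    case False
    have "card (terms I) \<noteq> 0"
      using h(18) wf_instD(4)[OF wf] by simp
    then obtain l' where l': "l = Suc l'"
      using h(3,19) by (cases l) auto
    have "\<exists>G. resC C = Some G \<and> real (setcost (sub C) G)
        \<le> (8 * (real (card (roots (sub C))) + real l') + 1) * real (optv (sub C))" if C: "C \<in> Cs" for C
    proof -
      note hyps = subinstance_hyps[OF C h(19)[unfolded l']] subinstance_optima(2,3)[OF h(20,21) C]
      have "wf_inst (sub C) \<longrightarrow> terms (sub C) \<noteq> {} \<longrightarrow> (\<forall>l. card (terms (sub C)) \<le> 2 ^ l \<longrightarrow>
          (\<exists>F. feasible (sub C) F) \<longrightarrow> real (optv (sub C)) \<le> x \<longrightarrow> (\<exists>F. resC C = Some F
          \<and> real (setcost (sub C) F) \<le> (8 * (real (card (roots (sub C))) + real l) + 1) * real (optv (sub C))))"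
        using h(16) C by blast
      then show ?thesis
        using hyps by blast
    qed
    then obtain G where G: "\<forall>C\<in>Cs. resC C = Some (G C) \<and> real (setcost (sub C) (G C))
        \<le> (8 * (real (card (roots (sub C))) + real l') + 1) * real (optv (sub C))"
      using bchoice[of Cs] by meson
    then have G_some: "\<And>C. C \<in> Cs \<Longrightarrow> resC C = Some (G C)"
      by blast
    have feasible_G: "feasible (sub C) (G C)" if C: "C \<in> Cs" for C
    proof -
      have "dst_run (sub C) x (resC C) (nC C)"
        using h(16) C by blast
      then show ?thesis
        using wf_sub[OF C] G_some[OF C] by (rule dst_run_feasible)
    qed
    have "x \<le> 2 * ?opt"
      using False by linarith
    then have "real (setcost I (Te \<union> (\<Union>C\<in>Cs. G C))) \<le> (8 * (?R + real (Suc l')) + 1) * ?opt"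
      using second_branch_cost_le[OF h(20,21) _ feasible_G] G by blast
    then have bound: "real (setcost I (Te \<union> (\<Union>C\<in>Cs. G C))) \<le> (8 * (?R + real l) + 1) * ?opt"
      using l' by simp
    have "res2 = Some (Te \<union> (\<Union>C\<in>Cs. G C))"
      using h(11) G_some by simp
    then have "ocost I res \<le> ocost I (Some (Te \<union> (\<Union>C\<in>Cs. G C)))"
      using h(14) by simp
    then obtain F where F: "res = Some F" "setcost I F \<le> setcost I (Te \<union> (\<Union>C\<in>Cs. G C))"
      by (rule ocost_le_Some)
    then show ?thesis
      using bound by (auto intro: order_trans)
  qed
qed

theorem lemma6:
  fixes I :: "('v, 'e) inst" and optt :: real and l k :: nat
    and res :: "'e set option" and n :: nat
  assumes "wf_inst I"
    and "planar_inst I"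
    and "terms I \<noteq> {}"
    and "card (terms I) \<le> 2 ^ l"
    and "optt \<le> 2 ^ k"
    and "\<exists>F. feasible I F"
    and "real (optv I) \<le> optt"
    and "dst_run I optt res n"
  shows "\<exists>F. res = Some F \<and> feasible I F
           \<and> real (setcost I F) \<le> (8 * (real (card (roots I)) + real l) + 1) * real (optv I)
           \<and> n \<le> card (terms I) * 2 ^ (2 * l + k)"
proof -
  obtain F where F: "res = Some F"
    "real (setcost I F) \<le> (8 * (real (card (roots I)) + real l) + 1) * real (optv I)"
    using dst_run_cost[OF assms(8,1,3,4,6,7)] by blast
  moreover have "feasible I F"
    using dst_run_feasible[OF assms(8,1) F(1)] .
  moreover have "n \<le> card (terms I) * 2 ^ (2 * l + k)"
    using dst_run_calls[OF assms(8,1,3,4,5)] .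
  ultimately show ?thesis
    by blast
qed

end
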